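(* Let $F=\{f_1,\ldots,f_N\}$ be a finite family of homeomorphisms of $\mathbb{S}^1=\mathbb{R}/\mathbb{Z}$ and $\mathbf{p}=(p_1,\ldots,p_N)$ a probability vector with all $p_j>0$. Assume $F$ is backward minimal. Let $\mu_-$ be an invariant probability measure for $(F^{-1},\mathbf{p})$, where $F^{-1}=\{f_1^{-1},\ldots,f_N^{-1}\}$, and let $\Phi_-\colon\mathbb{S}^1\to\mathbb{S}^1$ be defined by $\Phi_-(x)=\mu_-([0,x])$ (for $x\in[0,1)$). Then $$\rho(x,y):=\min\{\mu_-([x,y]),\mu_-([y,x])\}$$ is a metric on $\mathbb{S}^1$ and $(F,\mathbf{p})$ is non-expansive on average with respect to $\rho$. Moreover, the family $G=\{g_1,\ldots,g_N\}$ with $g_j:=\Phi_-\circ f_j\circ\Phi_-^{-1}$, equipped with the probabilities $\mathbf{p}$, is non-expansive on average with respect to $d$, and $L(G,d)=L(F,\rho)$.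
   Context: $d(x,y)=\min\{|y-x|,1-|y-x|\}$ is the standard metric on $\mathbb{S}^1$; $[x,y]$ denotes the closed arc from $x$ to $y$ in the positive (counterclockwise) direction. For $\omega\in\{1,\ldots,N\}^{\mathbb{N}}$ let $Z_n(x,\omega)=(f_{\omega_n}\circ\cdots\circ f_{\omega_1})(x)$. A family $F$ is forward minimal if for every nonempty open $O\subset\mathbb{S}^1$ and every $x$ there exist $n\ge0$ and $\omega$ with $Z_n(x,\omega)\in O$; $F$ is backward minimal if $F^{-1}$ is forward minimal. A Borel probability measure $\mu$ is invariant for $(H,\mathbf{p})$, $H=\{h_1,\ldots,h_N\}$, if $\mu(E)=\sum_j p_j\mu(h_j^{-1}(E))$ for all Borel $E$. $(H,\mathbf{p})$ is non-expansive on average with respect to a metric $\rho$ if $\sum_{j=1}^N p_j\rho(h_j(x),h_j(y))\le\rho(x,y)$ for all $x,y\in\mathbb{S}^1$. $L(H,\rho)$ is the set of $s\in[0,1/2]$ such that for every $j$ and every $x,y$ with $\rho(x,y)=s$ one has $\rho(h_j(x),h_j(y))=s$. *)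

theory Defs
  imports "HOL-Probability.Probability"
begin

text \<open>The circle S^1 = R/Z is represented as the unit circle in the complex plane;
  the point x in [0,1) corresponds to cis(2 pi x). \<close>

abbreviation circle :: "complex set" where
  "circle \<equiv> sphere 0 1"

definition cpos :: "complex \<Rightarrow> real" where
  "cpos z = frac (Arg z / (2 * pi))"

definition dS :: "complex \<Rightarrow> complex \<Rightarrow> real" where
  "dS x y = min \<bar>cpos y - cpos x\<bar> (1 - \<bar>cpos y - cpos x\<bar>)"

definition arc :: "complex \<Rightarrow> complex \<Rightarrow> complex set" where
  "arc x y = {z \<in> circle. frac (cpos z - cpos x) \<le> frac (cpos y - cpos x)}"

primrec Zorb :: "(nat \<Rightarrow> complex \<Rightarrow> complex) \<Rightarrow> nat \<Rightarrow> complex \<Rightarrow> (nat \<Rightarrow> nat) \<Rightarrow> complex" where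
  "Zorb h 0 x \<omega> = x"
| "Zorb h (Suc n) x \<omega> = h (\<omega> (Suc n)) (Zorb h n x \<omega>)"

definition forward_minimal :: "nat \<Rightarrow> (nat \<Rightarrow> complex \<Rightarrow> complex) \<Rightarrow> bool" where
  "forward_minimal N h \<longleftrightarrow>
     (\<forall>U x. openin (top_of_set circle) U \<and> U \<noteq> {} \<and> x \<in> circle \<longrightarrow>
        (\<exists>n \<omega>. (\<forall>k. \<omega> k \<in> {1..N}) \<and> Zorb h n x \<omega> \<in> U))"

definition inverse_family :: "(nat \<Rightarrow> complex \<Rightarrow> complex) \<Rightarrow> nat \<Rightarrow> complex \<Rightarrow> complex" where
  "inverse_family h j = inv_into circle (h j)"

definition backward_minimal :: "nat \<Rightarrow> (nat \<Rightarrow> complex \<Rightarrow> complex) \<Rightarrow> bool" where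
  "backward_minimal N h \<longleftrightarrow> forward_minimal N (inverse_family h)"

definition invariant_measure ::
  "nat \<Rightarrow> (nat \<Rightarrow> complex \<Rightarrow> complex) \<Rightarrow> (nat \<Rightarrow> real) \<Rightarrow> complex measure \<Rightarrow> bool" where
  "invariant_measure N h p \<mu> \<longleftrightarrow>
     prob_space \<mu> \<and> sets \<mu> = sets (restrict_space borel circle) \<and>
     (\<forall>E \<in> sets \<mu>. measure \<mu> E = (\<Sum>j=1..N. p j * measure \<mu> (h j -` E \<inter> circle)))"

definition nonexpansive_on_average ::
  "nat \<Rightarrow> (nat \<Rightarrow> complex \<Rightarrow> complex) \<Rightarrow> (nat \<Rightarrow> real) \<Rightarrow> (complex \<Rightarrow> complex \<Rightarrow> real) \<Rightarrow> bool" where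
  "nonexpansive_on_average N h p \<rho> \<longleftrightarrow>
     (\<forall>x\<in>circle. \<forall>y\<in>circle. (\<Sum>j=1..N. p j * \<rho> (h j x) (h j y)) \<le> \<rho> x y)"

definition Lset :: "nat \<Rightarrow> (nat \<Rightarrow> complex \<Rightarrow> complex) \<Rightarrow> (complex \<Rightarrow> complex \<Rightarrow> real) \<Rightarrow> real set" where
  "Lset N h \<rho> = {s \<in> {0..1/2}. \<forall>j\<in>{1..N}. \<forall>x\<in>circle. \<forall>y\<in>circle.
                    \<rho> x y = s \<longrightarrow> \<rho> (h j x) (h j y) = s}"

text \<open>Phi(x) = mu([0,x]), viewed as a map of the circle (0 corresponds to the point 1).\<close>
definition Phi :: "complex measure \<Rightarrow> complex \<Rightarrow> complex" where
  "Phi \<mu> z = cis (2 * pi * measure \<mu> (arc 1 z))"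

end

theory Submission
  imports Defs
begin

text \<open>Backward minimality forces the stationary measure \<open>\<mu>\<close> of \<open>F\<^sup>-\<^sup>1\<close> to have no atoms (the finitely
  many heaviest atoms would form a finite invariant set) and full support (a null open set would,
  by stationarity, pull back along the dense orbits to a finite null open cover of the circle).
  Consequently \<open>\<Phi>\<close> is a bijection of the circle with \<open>d(\<Phi> x, \<Phi> y) = \<rho>(x, y)\<close>, so \<open>\<rho>\<close> is a metric and
  every statement about \<open>(F, \<rho>)\<close> transfers to \<open>(G, d)\<close>. Non-expansiveness holds because \<open>f\<^sub>j\<close> maps
  the arc \<open>[x, y]\<close> onto a connected set containing \<open>f\<^sub>j x\<close> and \<open>f\<^sub>j y\<close>, hence containing one of the
  two arcs between them, while stationarity gives \<open>\<mu>[x, y] = \<Sum>\<^sub>j p\<^sub>j \<mu>(f\<^sub>j[x, y])\<close>.\<close>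

section \<open>The angular coordinate\<close>

text \<open>Membership in \<open>circle\<close> is kept atomic: unfolded to \<open>norm z = 1\<close> by the simplifier, it would no
  longer discharge the premises \<open>z \<in> circle\<close> of the rules below.\<close>

declare mem_sphere [simp del] mem_sphere_0 [simp del]

definition turn :: "real \<Rightarrow> complex" where
  "turn t = cis (2 * pi * t)"

lemma norm_turn [simp]: "norm (turn t) = 1"
  by (simp add: turn_def)

lemma turn_in_circle [simp]: "turn t \<in> circle"
  by (simp add: mem_sphere_0)

lemma one_in_circle [simp]: "1 \<in> circle"
  by (simp add: mem_sphere_0)

lemma turn_add: "turn (s + t) = turn s * turn t"
  by (simp add: turn_def cis_mult distrib_left)

lemma turn_of_int [simp]: "turn (of_int k) = 1"
  unfolding turn_def
  by (metis cis_multiple_2pi mult.commute mult.left_commute of_real_of_int_eq Ints_of_int)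

lemma turn_add_of_int [simp]: "turn (t + of_int k) = turn t"
  by (simp add: turn_add)

lemma turn_frac [simp]: "turn (frac t) = turn t"
proof -
  have "turn t = turn (frac t + of_int \<lfloor>t\<rfloor>)"
    by (simp add: frac_def)
  then show ?thesis
    by simp
qed

lemma cnj_turn: "cnj (turn t) = turn (- t)"
  by (simp add: turn_def cis_cnj)

lemma Arg_turn:
  assumes "- 1/2 < s" "s \<le> 1/2"
  shows "Arg (turn s) = 2 * pi * s"
proof -
  have "2 * pi * (- 1/2) < 2 * pi * s"
    using assms(1) by (intro mult_strict_left_mono) auto
  moreover have "2 * pi * s \<le> 2 * pi * (1/2)"
    using assms(2) by (intro mult_left_mono) auto
  ultimately show ?thesis
    unfolding turn_def by (intro Arg_cis) auto
qed

lemma cpos_turn: "cpos (turn t) = frac t"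
proof -
  define s where "s = 1/2 - frac (1/2 - t)"
  have t_eq: "t = s + of_int (- \<lfloor>1/2 - t\<rfloor>)"
    by (simp add: s_def frac_def)
  have "Arg (turn s) = 2 * pi * s"
    using frac_ge_0[of "1/2 - t"] frac_lt_1[of "1/2 - t"] by (intro Arg_turn) (auto simp: s_def)
  then have "cpos (turn s) = frac s"
    by (simp add: cpos_def)
  then show ?thesis
    by (subst (1 2) t_eq) (simp only: turn_add_of_int frac_add_of_int_right)
qed

lemma cpos_nonneg: "0 \<le> cpos z" and cpos_less_1: "cpos z < 1"
  by (auto simp: cpos_def frac_lt_1)

lemma frac_cpos [simp]: "frac (cpos z) = cpos z"
  using cpos_nonneg cpos_less_1 by (simp add: frac_eq)

lemma cpos_1 [simp]: "cpos 1 = 0"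
  by (simp add: cpos_def)

lemma turn_cpos:
  assumes "z \<in> circle"
  shows "turn (cpos z) = z"
proof -
  have "z \<noteq> 0" "norm z = 1"
    using assms by (auto simp: mem_sphere_0)
  then have "turn (Arg z / (2 * pi)) = z"
    by (simp add: turn_def cis_Arg sgn_div_norm)
  then show ?thesis
    by (metis cpos_def turn_frac)
qed

lemma cpos_eq_iff: "z \<in> circle \<Longrightarrow> w \<in> circle \<Longrightarrow> cpos z = cpos w \<longleftrightarrow> z = w"
  by (metis turn_cpos)

lemma frac_cpos_diff:
  "frac (cpos z - cpos w) = (if cpos w \<le> cpos z then cpos z - cpos w else cpos z - cpos w + 1)"
  using frac_diff_pos[of "cpos w" "cpos z"] frac_diff_neg[of "cpos z" "cpos w"] by auto

lemma frac_cpos_diff_eq_iff: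
  assumes "z \<in> circle" "w \<in> circle"
  shows "frac (cpos z - cpos c) = frac (cpos w - cpos c) \<longleftrightarrow> z = w"
  using assms cpos_eq_iff[OF assms] cpos_nonneg[of z] cpos_less_1[of z] cpos_nonneg[of w]
    cpos_less_1[of w] cpos_nonneg[of c] cpos_less_1[of c]
  unfolding frac_cpos_diff by (auto split: if_splits)

lemma infinite_circle: "infinite circle"
proof
  assume "finite circle"
  have "inj_on turn {0..<1}"
    by (rule inj_on_inverseI[where g = cpos]) (simp add: cpos_turn)
  then have "finite {0..<(1::real)}"
    using \<open>finite circle\<close> finite_imageD finite_subset turn_in_circle by (metis image_subsetI)
  then show False
    using infinite_Ico[of "0::real" 1] by simp
qed

lemma cpos_eq_Arg_uminus:
  assumes "z \<in> circle" "z \<noteq> 1"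
  shows "cpos z = Arg (- z) / (2 * pi) + 1/2"
proof -
  have "cpos z \<noteq> 0"
    using assms cpos_eq_iff[of z 1] by auto
  then have range: "- 1/2 < cpos z - 1/2" "cpos z - 1/2 \<le> 1/2"
    using cpos_nonneg[of z] cpos_less_1[of z] by auto
  have "turn (- 1/2) = - 1"
    by (simp add: turn_def complex_eq_iff)
  then have "- z = turn (cpos z - 1/2)"
    using turn_add[of "cpos z" "- 1/2"] turn_cpos[OF assms(1)] by simp
  then have "Arg (- z) = 2 * pi * (cpos z - 1/2)"
    using Arg_turn[OF range] by simp
  then show ?thesis
    by simp
qed

lemma continuous_on_cpos: "continuous_on (circle - {1}) cpos"
proof -
  have "- z \<notin> \<real>\<^sub>\<le>\<^sub>0" if "z \<in> circle - {1}" for z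
  proof
    assume "- z \<in> \<real>\<^sub>\<le>\<^sub>0"
    then obtain r where r: "z = of_real (- r)" "r \<le> 0"
      by (metis nonpos_Reals_cases minus_minus of_real_minus)
    moreover have "norm z = 1"
      using that by (simp add: mem_sphere_0)
    ultimately have "z = 1"
      by simp
    then show False
      using that by simp
  qed
  then have "continuous_on (circle - {1}) (\<lambda>z. Arg (- z) / (2 * pi) + 1/2)"
    by (intro continuous_intros) auto
  then show ?thesis
    by (rule continuous_on_cong[THEN iffD1, rotated 2]) (auto simp: cpos_eq_Arg_uminus)
qed

lemma cpos_mult_cnj:
  assumes "z \<in> circle" "c \<in> circle"
  shows "cpos (z * cnj c) = frac (cpos z - cpos c)"
proof -
  have "z * cnj c = turn (cpos z - cpos c)"
    using turn_add[of "cpos z" "- cpos c"] turn_cpos[OF assms(1)] turn_cpos[OF assms(2)]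
      cnj_turn[of "cpos c"] by simp
  then show ?thesis
    by (simp add: cpos_turn)
qed

lemma continuous_on_frac_cpos_diff:
  assumes "c \<in> circle"
  shows "continuous_on (circle - {c}) (\<lambda>z. frac (cpos z - cpos c))"
proof -
  have "(\<lambda>z. z * cnj c) ` (circle - {c}) \<subseteq> circle - {1}"
  proof (rule image_subsetI)
    fix z
    assume z: "z \<in> circle - {c}"
    then have "cpos (z * cnj c) \<noteq> cpos 1"
      using cpos_mult_cnj[of z c] frac_cpos_diff_eq_iff[of z c c] assms by auto
    then show "z * cnj c \<in> circle - {1}"
      using z assms by (auto simp: norm_mult mem_sphere_0)
  qed
  then have "continuous_on (circle - {c}) (\<lambda>z. cpos (z * cnj c))"
    by (intro continuous_on_compose2[OF continuous_on_cpos]) (auto intro!: continuous_intros)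
  then show ?thesis
    by (rule continuous_on_eq) (use assms cpos_mult_cnj in auto)
qed

lemma Metric_space_dS: "Metric_space circle dS"
proof
  fix x y z
  have range: "0 \<le> cpos x" "cpos x < 1" "0 \<le> cpos y" "cpos y < 1" "0 \<le> cpos z" "cpos z < 1"
    by (simp_all add: cpos_nonneg cpos_less_1)
  then show "0 \<le> dS x y"
    by (simp add: dS_def)
  show "dS x y = dS y x"
    by (simp add: dS_def abs_minus_commute)
  show "dS x y = 0 \<longleftrightarrow> x = y" if "x \<in> circle" "y \<in> circle"
    using range cpos_eq_iff[OF that] by (auto simp: dS_def min_def abs_if)
  show "dS x z \<le> dS x y + dS y z"
    using range by (auto simp: dS_def min_def abs_if)
qed

section \<open>Arcs\<close>

lemma arc_subset_circle: "arc x y \<subseteq> circle"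
  by (auto simp: arc_def)

lemma left_mem_arc: "x \<in> circle \<Longrightarrow> x \<in> arc x y"
  by (simp add: arc_def)

lemma right_mem_arc: "y \<in> circle \<Longrightarrow> y \<in> arc x y"
  by (simp add: arc_def)

lemma arc_eq_image:
  assumes "x \<in> circle"
  shows "arc x y = (\<lambda>s. turn (cpos x + s)) ` {0..frac (cpos y - cpos x)}"
proof
  show "arc x y \<subseteq> (\<lambda>s. turn (cpos x + s)) ` {0..frac (cpos y - cpos x)}"
  proof
    fix z
    assume z: "z \<in> arc x y"
    have "turn (cpos x + frac (cpos z - cpos x)) = turn (cpos x + (cpos z - cpos x))"
      by (simp only: turn_add turn_frac)
    then have "z = turn (cpos x + frac (cpos z - cpos x))"
      using z turn_cpos by (simp add: arc_def)
    moreover have "frac (cpos z - cpos x) \<in> {0..frac (cpos y - cpos x)}"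
      using z by (simp add: arc_def)
    ultimately show "z \<in> (\<lambda>s. turn (cpos x + s)) ` {0..frac (cpos y - cpos x)}"
      by blast
  qed
  show "(\<lambda>s. turn (cpos x + s)) ` {0..frac (cpos y - cpos x)} \<subseteq> arc x y"
  proof (rule image_subsetI)
    fix s
    assume s: "s \<in> {0..frac (cpos y - cpos x)}"
    then have "s < 1"
      using frac_lt_1[of "cpos y - cpos x"] by auto
    have "frac (cpos (turn (cpos x + s)) - cpos x) = frac (cpos x + s - cpos x)"
      using frac_add_simps(1)[of "cpos x + s" "- cpos x"] by (simp add: cpos_turn)
    also have "\<dots> = s"
      using s \<open>s < 1\<close> by (simp add: frac_eq)
    finally have "frac (cpos (turn (cpos x + s)) - cpos x) = s" .
    then show "turn (cpos x + s) \<in> arc x y"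
      using s by (simp add: arc_def)
  qed
qed

lemma connected_arc: "x \<in> circle \<Longrightarrow> connected (arc x y)"
  unfolding arc_eq_image
  by (intro connected_continuous_image) (auto simp: turn_def intro!: continuous_intros)

lemma compact_arc: "x \<in> circle \<Longrightarrow> compact (arc x y)"
  unfolding arc_eq_image
  by (intro compact_continuous_image) (auto simp: turn_def intro!: continuous_intros)

lemma arc_same:
  assumes "x \<in> circle"
  shows "arc x x = {x}"
proof -
  have "frac (cpos z - cpos x) \<le> 0 \<longleftrightarrow> z = x" if "z \<in> circle" for z
  proof -
    have "frac (cpos z - cpos x) \<le> 0 \<longleftrightarrow> frac (cpos z - cpos x) = 0"
      using frac_ge_0[of "cpos z - cpos x"] by linarith
    also have "\<dots> \<longleftrightarrow> frac (cpos z - cpos x) = frac (cpos x - cpos x)"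
      by simp
    also have "\<dots> \<longleftrightarrow> z = x"
      by (rule frac_cpos_diff_eq_iff[OF that assms])
    finally show ?thesis .
  qed
  then show ?thesis
    using assms by (auto simp: arc_def)
qed

lemma arc_Un_arc:
  assumes "x \<in> circle" "y \<in> circle" "x \<noteq> y"
  shows "arc x y \<union> arc y x = circle"
proof -
  have "cpos x \<noteq> cpos y"
    using assms cpos_eq_iff by blast
  then have "frac (cpos z - cpos x) \<le> frac (cpos y - cpos x) \<or>
      frac (cpos z - cpos y) \<le> frac (cpos x - cpos y)" for z
    using cpos_nonneg[of x] cpos_less_1[of x] cpos_nonneg[of y] cpos_less_1[of y]
      cpos_nonneg[of z] cpos_less_1[of z]
    unfolding frac_cpos_diff by (auto split: if_splits)
  then show ?thesis
    by (auto simp: arc_def)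
qed

lemma arc_Int_arc:
  assumes "x \<in> circle" "y \<in> circle"
  shows "arc x y \<inter> arc y x \<subseteq> {x, y}"
proof
  fix z
  assume z: "z \<in> arc x y \<inter> arc y x"
  then have "cpos z = cpos x \<or> cpos z = cpos y"
    using cpos_nonneg[of x] cpos_less_1[of x] cpos_nonneg[of y] cpos_less_1[of y]
      cpos_nonneg[of z] cpos_less_1[of z]
    unfolding arc_def frac_cpos_diff by (auto split: if_splits)
  then show "z \<in> {x, y}"
    using z assms cpos_eq_iff arc_subset_circle by blast
qed

lemma arc_eq_cpos_interval:
  assumes "cpos u \<le> cpos v"
  shows "arc u v = {z \<in> circle. cpos u \<le> cpos z \<and> cpos z \<le> cpos v}"
proof -
  have "frac (cpos z - cpos u) \<le> frac (cpos v - cpos u) \<longleftrightarrow> cpos u \<le> cpos z \<and> cpos z \<le> cpos v" for z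
    using assms cpos_nonneg[of z] cpos_less_1[of z] cpos_nonneg[of u] cpos_less_1[of u]
      cpos_less_1[of v]
    unfolding frac_cpos_diff by auto
  then show ?thesis
    by (auto simp: arc_def)
qed

lemma arc_from_1: "arc 1 v = {z \<in> circle. cpos z \<le> cpos v}"
  using arc_eq_cpos_interval[of 1 v] cpos_nonneg by auto

text \<open>If \<open>c \<in> [a, b]\<close> and \<open>d \<in> [b, a]\<close> both lay outside \<open>C\<close>, the angle measured from \<open>c\<close> would be
  continuous on \<open>C\<close> with its value at \<open>d\<close> between its values at \<open>b\<close> and \<open>a\<close>; so \<open>d \<in> C\<close>.\<close>

lemma connected_contains_arc:
  assumes C: "C \<subseteq> circle" "connected C" "a \<in> C" "b \<in> C"
  shows "arc a b \<subseteq> C \<or> arc b a \<subseteq> C"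
proof (rule ccontr)
  assume "\<not> ?thesis"
  then obtain c d where c: "c \<in> arc a b" "c \<notin> C" and d: "d \<in> arc b a" "d \<notin> C"
    by auto
  have cd: "c \<in> circle" "d \<in> circle"
    using c(1) d(1) arc_subset_circle by blast+
  define \<phi> where "\<phi> z = frac (cpos z - cpos c)" for z
  have "continuous_on C \<phi>"
    unfolding \<phi>_def using C c by (auto intro: continuous_on_subset[OF continuous_on_frac_cpos_diff[OF cd(1)]])
  then have conn: "connected (\<phi> ` C)"
    using C(2) connected_continuous_image by blast
  have ne: "cpos c \<noteq> cpos a" "cpos c \<noteq> cpos b" "cpos d \<noteq> cpos a" "cpos d \<noteq> cpos b"
    using cpos_eq_iff cd C c(2) d(2) by (metis subsetD)+
  have "frac (cpos c - cpos a) \<le> frac (cpos b - cpos a)" "frac (cpos d - cpos b) \<le> frac (cpos a - cpos b)"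
    using c d by (simp_all add: arc_def)
  then have "\<phi> b \<le> \<phi> d \<and> \<phi> d \<le> \<phi> a"
    using ne cpos_nonneg[of a] cpos_less_1[of a] cpos_nonneg[of b] cpos_less_1[of b]
      cpos_nonneg[of c] cpos_less_1[of c] cpos_nonneg[of d] cpos_less_1[of d]
    unfolding \<phi>_def frac_cpos_diff by (auto split: if_splits)
  then have "\<phi> d \<in> \<phi> ` C"
    using conn C(3,4) unfolding connected_iff_interval by blast
  then obtain z where "z \<in> C" "\<phi> z = \<phi> d"
    by auto
  then show False
    using frac_cpos_diff_eq_iff[of z d c] C(1) cd d(2) unfolding \<phi>_def by auto
qed

section \<open>Probability measures on the circle\<close>

definition arc_dist :: "complex measure \<Rightarrow> complex \<Rightarrow> complex \<Rightarrow> real" where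
  "arc_dist \<mu> x y = min (measure \<mu> (arc x y)) (measure \<mu> (arc y x))"

lemma (in prob_space) finite_heavy_atoms:
  assumes "0 < \<epsilon>"
  shows "finite {x. \<epsilon> \<le> measure M {x}}"
proof (rule ccontr)
  let ?B = "{x. \<epsilon> \<le> measure M {x}}"
  assume "infinite ?B"
  obtain n :: nat where n: "1 / \<epsilon> < n"
    using reals_Archimedean2 by blast
  obtain S where S: "S \<subseteq> ?B" "finite S" "card S = n"
    using infinite_arbitrarily_large[OF \<open>infinite ?B\<close>] by blast
  have sets: "{x} \<in> events" if "x \<in> S" for x
    using S that assms measure_notin_sets[of "{x}" M] by force
  have "n * \<epsilon> \<le> (\<Sum>x\<in>S. measure M {x})"
    using S sum_mono[of S "\<lambda>_. \<epsilon>" "\<lambda>x. measure M {x}"] by auto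
  also have "\<dots> = measure M S"
    using S(2) sets by (intro measure_eq_sum_singleton[symmetric]) auto
  also have "\<dots> \<le> 1"
    by (rule prob_le_1)
  finally show False
    using n assms by (simp add: field_simps)
qed

lemma (in prob_space) heaviest_atom_exists: "\<exists>x0. \<forall>y. measure M {y} \<le> measure M {x0}"
proof (cases "\<exists>x. 0 < measure M {x}")
  case True
  then obtain x where x: "0 < measure M {x}"
    by blast
  define H where "H = {z. measure M {x} \<le> measure M {z}}"
  have H: "finite H" "x \<in> H"
    using finite_heavy_atoms[OF x] by (auto simp: H_def)
  then obtain x0 where x0: "x0 \<in> H" "Max ((\<lambda>z. measure M {z}) ` H) = measure M {x0}"
    by (metis obtains_MAX empty_iff)
  have le: "measure M {z} \<le> measure M {x0}" if "z \<in> H" for z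
    using H(1) that x0(2)[symmetric] by (simp add: Max_ge)
  have "measure M {y} \<le> measure M {x0}" for y
  proof (cases "y \<in> H")
    case False
    then have "measure M {y} < measure M {x}"
      by (simp add: H_def)
    then show ?thesis
      using le[OF H(2)] by linarith
  qed (rule le)
  then show ?thesis
    by blast
next
  case False
  then show ?thesis
    by (meson measure_nonneg not_less order_trans)
qed

locale circle_prob_space = prob_space \<mu> for \<mu> :: "complex measure" +
  assumes sets_eq: "sets \<mu> = sets (restrict_space borel circle)"
begin

lemma space_eq [simp]: "space \<mu> = circle"
  using sets_eq_imp_space_eq[OF sets_eq] by (simp add: space_restrict_space)

lemma borel_in_sets: "S \<in> sets borel \<Longrightarrow> S \<subseteq> circle \<Longrightarrow> S \<in> sets \<mu>"
  unfolding sets_eq by (subst sets_restrict_space_iff) auto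

lemma closed_in_sets: "closed S \<Longrightarrow> S \<subseteq> circle \<Longrightarrow> S \<in> sets \<mu>"
  by (intro borel_in_sets) auto

lemma openin_in_sets: "openin (top_of_set circle) U \<Longrightarrow> U \<in> sets \<mu>"
  by (auto simp: openin_open intro: borel_in_sets)

lemma arc_in_sets: "x \<in> circle \<Longrightarrow> arc x y \<in> sets \<mu>"
  by (intro closed_in_sets compact_imp_closed compact_arc arc_subset_circle)

lemma measurable_cpos: "cpos \<in> borel_measurable \<mu>"
proof -
  have "cpos \<in> borel_measurable (restrict_space (restrict_space borel circle) (- {1}))"
    using borel_measurable_continuous_on_restrict[OF continuous_on_cpos]
    by (subst restrict_restrict_space) (auto simp: Diff_eq)
  then have "cpos \<in> borel_measurable (restrict_space borel circle)"
    by (rule measurable_restrict_countable[rotated 3]) (auto simp: sets_restrict_space_iff)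
  then show ?thesis
    by (simp add: measurable_cong_sets[OF sets_eq refl])
qed

lemma cpos_le_in_sets: "{z \<in> circle. cpos z \<le> t} \<in> sets \<mu>"
proof -
  have "cpos -` {..t} \<inter> space \<mu> \<in> sets \<mu>"
    by (rule measurable_sets[OF measurable_cpos]) simp
  then show ?thesis
    by (simp add: vimage_def Int_def conj_commute)
qed

lemma cpos_between_in_sets: "{z \<in> circle. a < cpos z \<and> cpos z \<le> b} \<in> sets \<mu>"
proof -
  have "{z \<in> circle. a < cpos z \<and> cpos z \<le> b} = {z \<in> circle. cpos z \<le> b} - {z \<in> circle. cpos z \<le> a}"
    by auto
  then show ?thesis
    using cpos_le_in_sets by auto
qed

lemma arc_dist_image_le:
  assumes "continuous_on circle f" "f ` circle \<subseteq> circle" "x \<in> circle" "y \<in> circle"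
  shows "arc_dist \<mu> (f x) (f y) \<le> measure \<mu> (f ` arc x y)"
proof -
  let ?K = "f ` arc x y"
  have cont: "continuous_on (arc x y) f"
    using assms(1) arc_subset_circle by (rule continuous_on_subset)
  have K: "?K \<subseteq> circle"
    using assms(2) arc_subset_circle by blast
  have "?K \<in> sets \<mu>"
    using K compact_continuous_image[OF cont compact_arc[OF assms(3)]]
    by (intro closed_in_sets compact_imp_closed)
  moreover have "arc (f x) (f y) \<subseteq> ?K \<or> arc (f y) (f x) \<subseteq> ?K"
    using left_mem_arc[OF assms(3)] right_mem_arc[OF assms(4)]
    by (intro connected_contains_arc K connected_continuous_image[OF cont connected_arc[OF assms(3)]])
      auto
  ultimately show ?thesis
    unfolding arc_dist_def using finite_measure_mono by (metis min.coboundedI1 min.coboundedI2)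
qed

lemma nonexpansive_on_average_arc_dist:
  assumes maps: "\<forall>j\<in>{1..N}. continuous_on circle (f j) \<and> f j ` circle \<subseteq> circle"
    and p_nonneg: "\<forall>j\<in>{1..N}. 0 \<le> p j"
    and stationary: "\<forall>E\<in>sets \<mu>. measure \<mu> E = (\<Sum>j=1..N. p j * measure \<mu> (f j ` E))"
  shows "nonexpansive_on_average N f p (arc_dist \<mu>)"
  unfolding nonexpansive_on_average_def
proof (intro ballI)
  fix x y
  assume xy: "x \<in> circle" "y \<in> circle"
  have bound: "(\<Sum>j=1..N. p j * arc_dist \<mu> (f j u) (f j v)) \<le> measure \<mu> (arc u v)"
    if "u \<in> circle" "v \<in> circle" for u v
  proof -
    have "(\<Sum>j=1..N. p j * arc_dist \<mu> (f j u) (f j v)) \<le> (\<Sum>j=1..N. p j * measure \<mu> (f j ` arc u v))"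
      using maps p_nonneg that by (intro sum_mono mult_left_mono arc_dist_image_le) auto
    also have "\<dots> = measure \<mu> (arc u v)"
      using stationary arc_in_sets[OF that(1)] by simp
    finally show ?thesis .
  qed
  have "arc_dist \<mu> (f j y) (f j x) = arc_dist \<mu> (f j x) (f j y)" for j
    by (simp add: arc_dist_def min.commute)
  then show "(\<Sum>j=1..N. p j * arc_dist \<mu> (f j x) (f j y)) \<le> arc_dist \<mu> x y"
    using bound[OF xy] bound[OF xy(2,1)] by (simp add: arc_dist_def)
qed

end

locale diffuse_circle_prob = circle_prob_space +
  assumes no_atoms: "measure \<mu> {x} = 0"
    and full_support: "openin (top_of_set circle) U \<Longrightarrow> U \<noteq> {} \<Longrightarrow> 0 < measure \<mu> U"
begin

definition angle_cdf :: "real \<Rightarrow> real" where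
  "angle_cdf t = measure \<mu> {z \<in> circle. cpos z \<le> t}"

lemma isCont_angle_cdf: "isCont angle_cdf t"
proof -
  let ?\<nu> = "distr \<mu> borel cpos"
  interpret \<nu>: real_distribution ?\<nu>
    using measurable_cpos by (intro real_distribution_distr) simp
  have cdf: "angle_cdf s = cdf ?\<nu> s" for s
    using measurable_cpos by (simp add: cdf_def measure_distr angle_cdf_def vimage_def Int_def conj_commute)
  have "measure ?\<nu> {t} = measure \<mu> (cpos -` {t} \<inter> circle)"
    using measurable_cpos by (simp add: measure_distr)
  also have "\<dots> \<le> measure \<mu> {turn t}"
    using turn_cpos by (intro finite_measure_mono closed_in_sets) auto
  finally have "measure ?\<nu> {t} = 0"
    using no_atoms[of "turn t"] measure_nonneg[of ?\<nu> "{t}"] by linarith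
  then show ?thesis
    using cdf \<nu>.isCont_cdf by (metis ext)
qed

lemma angle_cdf_mono: "s \<le> t \<Longrightarrow> angle_cdf s \<le> angle_cdf t"
  unfolding angle_cdf_def by (intro finite_measure_mono cpos_le_in_sets) auto

lemma angle_cdf_0: "angle_cdf 0 = 0"
proof -
  have "z = 1" if "z \<in> circle" "cpos z \<le> 0" for z
    using that cpos_nonneg[of z] cpos_eq_iff[OF that(1) one_in_circle] by simp
  then have "{z \<in> circle. cpos z \<le> 0} \<subseteq> {1}"
    by blast
  then have "angle_cdf 0 \<le> measure \<mu> {1}"
    unfolding angle_cdf_def by (intro finite_measure_mono closed_in_sets) auto
  then show ?thesis
    using no_atoms[of 1] measure_nonneg[of \<mu>] unfolding angle_cdf_def by (metis order.antisym)
qed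

lemma angle_cdf_1: "angle_cdf 1 = 1"
proof -
  have "{z \<in> circle. cpos z \<le> 1} = space \<mu>"
    using cpos_less_1 less_imp_le by auto
  then show ?thesis
    unfolding angle_cdf_def using prob_space by simp
qed

lemma measure_cpos_between:
  assumes "a \<le> b"
  shows "measure \<mu> {z \<in> circle. a < cpos z \<and> cpos z \<le> b} = angle_cdf b - angle_cdf a"
proof -
  have "{z \<in> circle. a < cpos z \<and> cpos z \<le> b} = {z \<in> circle. cpos z \<le> b} - {z \<in> circle. cpos z \<le> a}"
    by auto
  moreover have "{z \<in> circle. cpos z \<le> a} \<subseteq> {z \<in> circle. cpos z \<le> b}"
    using assms by auto
  ultimately show ?thesis
    unfolding angle_cdf_def using finite_measure_Diff[OF cpos_le_in_sets cpos_le_in_sets] by simp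
qed

lemma angle_cdf_strict_mono:
  assumes "0 \<le> a" "a < b" "b \<le> 1"
  shows "angle_cdf a < angle_cdf b"
proof -
  let ?U = "{z \<in> circle. a < cpos z \<and> cpos z < b}"
  have "openin (top_of_set (circle - {1})) ((circle - {1}) \<inter> cpos -` {a<..<b})"
    by (rule continuous_openin_preimage_gen[OF continuous_on_cpos open_greaterThanLessThan])
  moreover have "(circle - {1}) \<inter> cpos -` {a<..<b} = ?U"
    using assms by auto
  moreover have "openin (top_of_set circle) (circle - {1})"
    by (intro openin_diff) (auto intro: closed_subset)
  ultimately have "openin (top_of_set circle) ?U"
    using openin_trans by metis
  moreover have "turn ((a + b) / 2) \<in> ?U"
    using assms by (simp add: cpos_turn frac_eq)
  ultimately have "0 < measure \<mu> ?U"
    using full_support by blast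
  also have "\<dots> \<le> measure \<mu> {z \<in> circle. a < cpos z \<and> cpos z \<le> b}"
    by (intro finite_measure_mono cpos_between_in_sets) auto
  also have "\<dots> = angle_cdf b - angle_cdf a"
    using assms by (intro measure_cpos_between) simp
  finally show ?thesis
    by simp
qed

lemma measure_arc_from_1: "measure \<mu> (arc 1 u) = angle_cdf (cpos u)"
  unfolding angle_cdf_def arc_from_1 ..

lemma measure_arc_from_1_less_1: "measure \<mu> (arc 1 u) < 1"
  using angle_cdf_strict_mono[of "cpos u" 1] cpos_nonneg cpos_less_1
  by (simp add: measure_arc_from_1 angle_cdf_1)

lemma measure_arc_from_1_inj:
  assumes "u \<in> circle" "v \<in> circle" "measure \<mu> (arc 1 u) = measure \<mu> (arc 1 v)"
  shows "u = v"
proof -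
  have "cpos u = cpos v"
    using angle_cdf_strict_mono[of "cpos u" "cpos v"] angle_cdf_strict_mono[of "cpos v" "cpos u"]
      cpos_nonneg cpos_less_1 assms(3)
    by (force simp: measure_arc_from_1 less_imp_le)
  then show ?thesis
    using assms cpos_eq_iff by blast
qed

lemma measure_arc:
  assumes "u \<in> circle" "cpos u \<le> cpos v"
  shows "measure \<mu> (arc u v) = measure \<mu> (arc 1 v) - measure \<mu> (arc 1 u)"
proof -
  let ?S = "{z \<in> circle. cpos u < cpos z \<and> cpos z \<le> cpos v}"
  have arc: "arc u v = ?S \<union> {u}"
    using assms cpos_eq_iff[OF _ assms(1)] by (force simp: arc_eq_cpos_interval[OF assms(2)])
  have "measure \<mu> (arc u v) \<le> measure \<mu> ?S + measure \<mu> {u}"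
    unfolding arc using cpos_between_in_sets closed_in_sets[of "{u}"] assms(1)
    by (intro measure_Un_le) auto
  moreover have "measure \<mu> ?S \<le> measure \<mu> (arc u v)"
    by (rule finite_measure_mono[OF _ arc_in_sets[OF assms(1)]]) (auto simp: arc)
  ultimately have "measure \<mu> (arc u v) = measure \<mu> ?S"
    using no_atoms[of u] by linarith
  also have "\<dots> = measure \<mu> (arc 1 v) - measure \<mu> (arc 1 u)"
    using measure_cpos_between[OF assms(2)] by (simp add: measure_arc_from_1)
  finally show ?thesis .
qed

lemma measure_arc_add_arc:
  assumes "u \<in> circle" "v \<in> circle" "u \<noteq> v"
  shows "measure \<mu> (arc u v) + measure \<mu> (arc v u) = 1"
proof -
  have sets: "arc u v \<in> sets \<mu>" "arc v u \<in> sets \<mu>"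
    using assms arc_in_sets by auto
  have "measure \<mu> (arc v u \<inter> arc u v) \<le> measure \<mu> {u, v}"
    using arc_Int_arc[OF assms(2,1)] assms by (intro finite_measure_mono closed_in_sets) auto
  also have "\<dots> = 0"
    using assms by (subst finite_measure_eq_sum_singleton) (auto intro: closed_in_sets simp: no_atoms)
  finally have null: "measure \<mu> (arc v u \<inter> arc u v) = 0"
    using measure_nonneg order.antisym by blast
  have "1 = measure \<mu> (arc u v \<union> arc v u)"
    using arc_Un_arc[OF assms] prob_space by simp
  also have "\<dots> = measure \<mu> (arc u v) + measure \<mu> (arc v u - arc u v)"
    using sets by (rule finite_measure_Union')
  also have "measure \<mu> (arc v u - arc u v) = measure \<mu> (arc v u)"
    using finite_measure_Diff'[OF sets(2,1)] null by simp
  finally show ?thesis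
    by simp
qed

lemma cpos_Phi: "cpos (Phi \<mu> u) = measure \<mu> (arc 1 u)"
  using measure_arc_from_1_less_1[of u] by (simp add: Phi_def cpos_turn[unfolded turn_def] frac_eq)

lemma dS_Phi:
  assumes "u \<in> circle" "v \<in> circle"
  shows "dS (Phi \<mu> u) (Phi \<mu> v) = arc_dist \<mu> u v"
proof (cases "cpos u \<le> cpos v")
  case True
  show ?thesis
  proof (cases "u = v")
    case True
    then show ?thesis
      using assms by (simp add: dS_def arc_dist_def arc_same no_atoms)
  next
    case False
    then show ?thesis
      using measure_arc[OF assms(1) True] measure_arc_add_arc[OF assms False]
        angle_cdf_mono[OF True]
      by (simp add: dS_def arc_dist_def cpos_Phi measure_arc_from_1)
  qed
next
  case False
  then have "cpos v \<le> cpos u" "u \<noteq> v"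
    by auto
  then show ?thesis
    using measure_arc[OF assms(2)] measure_arc_add_arc[OF assms(2,1)]
      angle_cdf_mono[of "cpos v" "cpos u"]
    by (simp add: dS_def arc_dist_def cpos_Phi measure_arc_from_1)
qed

lemma Phi_in_circle: "Phi \<mu> u \<in> circle"
  by (simp add: Phi_def mem_sphere_0)

lemma inj_on_Phi: "inj_on (Phi \<mu>) circle"
  by (rule inj_onI) (metis cpos_Phi measure_arc_from_1_inj)

lemma Phi_surj:
  assumes "w \<in> circle"
  shows "w \<in> Phi \<mu> ` circle"
proof -
  have "continuous_on {0..1} angle_cdf"
    by (intro continuous_at_imp_continuous_on ballI isCont_angle_cdf)
  then have "\<exists>t. 0 \<le> t \<and> t \<le> 1 \<and> angle_cdf t = cpos w"
    by (intro IVT') (simp_all add: angle_cdf_0 angle_cdf_1 cpos_nonneg less_imp_le[OF cpos_less_1])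
  then obtain t where t: "0 \<le> t" "t \<le> 1" "angle_cdf t = cpos w"
    by blast
  then have "t \<noteq> 1"
    using cpos_less_1[of w] angle_cdf_1 by auto
  then have "t < 1"
    using t(2) by simp
  then have "Phi \<mu> (turn t) = w"
    using t turn_cpos[OF assms]
    by (simp add: Phi_def measure_arc_from_1 cpos_turn frac_eq flip: turn_def)
  then show ?thesis
    by (metis image_eqI turn_in_circle)
qed

lemma bij_betw_Phi: "bij_betw (Phi \<mu>) circle circle"
  using inj_on_Phi Phi_in_circle Phi_surj by (auto simp: bij_betw_def)

lemma Metric_space_arc_dist: "Metric_space circle (arc_dist \<mu>)"
proof
  interpret dS: Metric_space circle dS
    by (rule Metric_space_dS)
  fix x y z
  show "0 \<le> arc_dist \<mu> x y"
    by (simp add: arc_dist_def)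
  show "arc_dist \<mu> x y = arc_dist \<mu> y x"
    by (simp add: arc_dist_def min.commute)
  show "arc_dist \<mu> x y = 0 \<longleftrightarrow> x = y" if "x \<in> circle" "y \<in> circle"
    using that by (simp add: dS_Phi[symmetric] Phi_in_circle inj_on_eq_iff[OF inj_on_Phi])
  show "arc_dist \<mu> x z \<le> arc_dist \<mu> x y + arc_dist \<mu> y z" if "x \<in> circle" "y \<in> circle" "z \<in> circle"
    using that dS.triangle[of "Phi \<mu> x" "Phi \<mu> y" "Phi \<mu> z"] by (simp add: dS_Phi Phi_in_circle)
qed

end

section \<open>Stationary measures of minimal systems\<close>

lemma homeomorphism_inv_into:
  assumes "homeomorphism S T f g"
  shows "homeomorphism S T f (inv_into S f)"
proof -
  have g: "inv_into S f y = g y" if "y \<in> T" for y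
    using assms that
    by (metis homeomorphism_apply1 homeomorphism_apply2 homeomorphism_image2 image_eqI
        inj_on_inverseI inv_into_f_eq)
  show ?thesis
    by (rule homeomorphism_cong[OF assms]) (auto simp: g)
qed

lemma vimage_homeomorphism:
  assumes "homeomorphism S T f g" "E \<subseteq> T"
  shows "f -` E \<inter> S = g ` E"
  using assms homeomorphism_apply1[OF assms(1)] homeomorphism_apply2[OF assms(1)]
    homeomorphism_image1[OF assms(1)] homeomorphism_image2[OF assms(1)]
  by (auto intro!: image_eqI)

locale stationary_measure =
  fixes N :: nat and h :: "nat \<Rightarrow> complex \<Rightarrow> complex" and p :: "nat \<Rightarrow> real"
    and \<mu> :: "complex measure"
  assumes homeo: "\<forall>j\<in>{1..N}. \<exists>g. homeomorphism circle circle (h j) g"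
    and p_pos: "\<forall>j\<in>{1..N}. 0 < p j"
    and p_sum: "(\<Sum>j=1..N. p j) = 1"
    and stationary: "invariant_measure N h p \<mu>"
begin

sublocale circle_prob_space \<mu>
  using stationary unfolding invariant_measure_def circle_prob_space_def circle_prob_space_axioms_def
  by blast

lemma homeomorphism_inverse_family: "j \<in> {1..N} \<Longrightarrow> homeomorphism circle circle (h j) (inverse_family h j)"
  using homeo homeomorphism_inv_into by (fastforce simp: inverse_family_def)

lemma measure_eq_sum_vimage:
  "E \<in> sets \<mu> \<Longrightarrow> measure \<mu> E = (\<Sum>j=1..N. p j * measure \<mu> (h j -` E \<inter> circle))"
  using stationary by (simp add: invariant_measure_def)

lemma h_in_circle: "j \<in> {1..N} \<Longrightarrow> x \<in> circle \<Longrightarrow> h j x \<in> circle"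
  using homeomorphism_image1[OF homeomorphism_inverse_family] by blast

lemma Zorb_in_circle:
  assumes "x \<in> circle" "\<forall>k. \<omega> k \<in> {1..N}"
  shows "Zorb h n x \<omega> \<in> circle"
  using assms by (induction n) (auto intro: h_in_circle)

lemma sum_p_eq_0D:
  assumes "\<forall>j\<in>{1..N}. 0 \<le> a j" "(\<Sum>j=1..N. p j * a j) = 0" "j \<in> {1..N}"
  shows "a j = 0"
proof -
  have "p j * a j = 0"
    using assms p_pos sum_nonneg_eq_0_iff[of "{1..N}" "\<lambda>j. p j * a j"] by (auto simp: less_imp_le)
  moreover have "0 < p j"
    using p_pos assms(3) by blast
  ultimately show ?thesis
    by simp
qed

lemma nonexpansive_on_average_inverse:
  assumes "\<And>j. j \<in> {1..N} \<Longrightarrow> homeomorphism circle circle (h j) (f j)"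
  shows "nonexpansive_on_average N f p (arc_dist \<mu>)"
proof (rule nonexpansive_on_average_arc_dist)
  show "\<forall>j\<in>{1..N}. continuous_on circle (f j) \<and> f j ` circle \<subseteq> circle"
    using assms homeomorphism_cont2 homeomorphism_image2 by blast
  show "\<forall>j\<in>{1..N}. 0 \<le> p j"
    using p_pos by (auto intro: less_imp_le)
  show "\<forall>E\<in>sets \<mu>. measure \<mu> E = (\<Sum>j=1..N. p j * measure \<mu> (f j ` E))"
  proof
    fix E
    assume E: "E \<in> sets \<mu>"
    then have "E \<subseteq> circle"
      using sets.sets_into_space by fastforce
    then show "measure \<mu> E = (\<Sum>j=1..N. p j * measure \<mu> (f j ` E))"
      unfolding measure_eq_sum_vimage[OF E]
      by (intro sum.cong refl) (simp add: vimage_homeomorphism[OF assms] \<open>E \<subseteq> circle\<close>)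
  qed
qed

lemma measure_singleton_eq_sum:
  assumes "z \<in> circle"
  shows "measure \<mu> {z} = (\<Sum>j=1..N. p j * measure \<mu> {inverse_family h j z})"
proof -
  have "measure \<mu> {z} = (\<Sum>j=1..N. p j * measure \<mu> (h j -` {z} \<inter> circle))"
    using assms by (intro measure_eq_sum_vimage closed_in_sets) auto
  also have "\<dots> = (\<Sum>j=1..N. p j * measure \<mu> {inverse_family h j z})"
    using assms by (intro sum.cong refl) (simp add: vimage_homeomorphism[OF homeomorphism_inverse_family])
  finally show ?thesis .
qed

lemma heaviest_atom_inverse_image:
  assumes max: "\<And>y. measure \<mu> {y} \<le> m" and z: "z \<in> circle" "measure \<mu> {z} = m"
    and j: "j \<in> {1..N}"
  shows "measure \<mu> {inverse_family h j z} = m"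
proof -
  have "(\<Sum>i=1..N. p i * (m - measure \<mu> {inverse_family h i z}))
      = m * (\<Sum>i=1..N. p i) - (\<Sum>i=1..N. p i * measure \<mu> {inverse_family h i z})"
    by (simp add: algebra_simps sum_subtractf sum_distrib_left)
  also have "\<dots> = 0"
    using p_sum measure_singleton_eq_sum[OF z(1)] z(2) by simp
  finally have sum0: "(\<Sum>i=1..N. p i * (m - measure \<mu> {inverse_family h i z})) = 0" .
  have "m - measure \<mu> {inverse_family h j z} = 0"
    by (rule sum_p_eq_0D[OF _ sum0 j]) (simp add: max)
  then show ?thesis
    by simp
qed

lemma invariant_if_inverse_invariant:
  assumes "finite A" "A \<subseteq> circle" "j \<in> {1..N}" "inverse_family h j ` A \<subseteq> A" "y \<in> A"
  shows "h j y \<in> A"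
proof -
  have "inj_on (inverse_family h j) A"
    using homeomorphism_apply2[OF homeomorphism_inverse_family[OF assms(3)]] assms(2)
    by (intro inj_on_inverseI[where g = "h j"]) auto
  then have "inverse_family h j ` A = A"
    using endo_inj_surj[OF assms(1,4)] by blast
  then obtain z where "z \<in> A" "y = inverse_family h j z"
    using assms(5) by blast
  then show ?thesis
    using homeomorphism_apply2[OF homeomorphism_inverse_family[OF assms(3)]] assms(2) by auto
qed

lemma null_open_vimage:
  assumes "openin (top_of_set circle) V" "measure \<mu> V = 0" "j \<in> {1..N}"
  shows "openin (top_of_set circle) (h j -` V \<inter> circle) \<and> measure \<mu> (h j -` V \<inter> circle) = 0"
proof
  show "openin (top_of_set circle) (h j -` V \<inter> circle)"
    using continuous_openin_preimage[OF homeomorphism_cont1[OF homeomorphism_inverse_family[OF assms(3)]] _ assms(1)]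
      homeomorphism_image1[OF homeomorphism_inverse_family[OF assms(3)]] by (auto simp: Int_commute)
  show "measure \<mu> (h j -` V \<inter> circle) = 0"
    using sum_p_eq_0D[of "\<lambda>i. measure \<mu> (h i -` V \<inter> circle)"] assms
      measure_eq_sum_vimage[OF openin_in_sets[OF assms(1)]] by simp
qed

lemma null_open_orbit_vimage:
  assumes "\<forall>k. \<omega> k \<in> {1..N}" "openin (top_of_set circle) V" "measure \<mu> V = 0"
  shows "openin (top_of_set circle) {x \<in> circle. Zorb h n x \<omega> \<in> V}
    \<and> measure \<mu> {x \<in> circle. Zorb h n x \<omega> \<in> V} = 0"
  using assms(2,3)
proof (induction n arbitrary: V)
  case 0
  have "{x \<in> circle. Zorb h 0 x \<omega> \<in> V} = V"
    using openin_imp_subset[OF "0.prems"(1)] by auto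
  with "0.prems" show ?case
    by simp
next
  case (Suc n)
  let ?V' = "h (\<omega> (Suc n)) -` V \<inter> circle"
  have "\<omega> (Suc n) \<in> {1..N}"
    using assms(1) by blast
  then have V': "openin (top_of_set circle) ?V'" "measure \<mu> ?V' = 0"
    using null_open_vimage[OF Suc.prems] by auto
  have "{x \<in> circle. Zorb h (Suc n) x \<omega> \<in> V} = {x \<in> circle. Zorb h n x \<omega> \<in> ?V'}"
    using Zorb_in_circle[OF _ assms(1)] by auto
  then show ?case
    using Suc.IH[OF V'] by simp
qed

end

locale minimal_stationary_measure = stationary_measure +
  assumes minimal: "forward_minimal N h"
begin

lemma no_finite_invariant_set:
  assumes "finite A" "A \<subseteq> circle" "x \<in> A" "\<forall>j\<in>{1..N}. \<forall>y\<in>A. h j y \<in> A"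
  shows False
proof -
  have orbit: "Zorb h n x \<omega> \<in> A" if "\<forall>k. \<omega> k \<in> {1..N}" for n \<omega>
    using assms(3,4) that by (induction n) auto
  have "openin (top_of_set circle) (circle - A)"
    using assms(1,2) by (intro openin_diff closed_subset finite_imp_closed) auto
  moreover have "circle - A \<noteq> {}"
    using assms(1) infinite_circle by (metis Diff_eq_empty_iff finite_subset)
  ultimately obtain n \<omega> where "\<forall>k. \<omega> k \<in> {1..N}" "Zorb h n x \<omega> \<in> circle - A"
    using minimal assms(2,3) unfolding forward_minimal_def by blast
  then show False
    using orbit by blast
qed

text \<open>The atoms of maximal mass form a finite set which, by stationarity, is invariant.\<close>

lemma no_atoms: "measure \<mu> {x} = 0"
proof (rule ccontr)
  assume "measure \<mu> {x} \<noteq> 0"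
  obtain x0 where max: "\<And>y. measure \<mu> {y} \<le> measure \<mu> {x0}"
    using heaviest_atom_exists by blast
  then have pos: "0 < measure \<mu> {x0}"
    using \<open>measure \<mu> {x} \<noteq> 0\<close> measure_nonneg[of \<mu> "{x}"] max[of x] by linarith
  then have "x0 \<in> circle"
    using measure_notin_sets[of "{x0}" \<mu>] sets.sets_into_space by force
  define A where "A = {z \<in> circle. measure \<mu> {z} = measure \<mu> {x0}}"
  have A: "finite A" "A \<subseteq> circle" "x0 \<in> A"
    using finite_heavy_atoms[OF pos] \<open>x0 \<in> circle\<close>
    by (auto simp: A_def elim: finite_subset[rotated])
  have "inverse_family h j ` A \<subseteq> A" if "j \<in> {1..N}" for j
    using heaviest_atom_inverse_image[OF max _ _ that] homeomorphism_image2[OF homeomorphism_inverse_family[OF that]]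
    by (auto simp: A_def)
  then have "\<forall>j\<in>{1..N}. \<forall>y\<in>A. h j y \<in> A"
    using invariant_if_inverse_invariant[OF A(1,2)] by blast
  then show False
    by (rule no_finite_invariant_set[OF A])
qed

lemma full_support:
  assumes "openin (top_of_set circle) U" "U \<noteq> {}"
  shows "0 < measure \<mu> U"
proof (rule ccontr)
  assume "\<not> 0 < measure \<mu> U"
  then have U: "measure \<mu> U = 0"
    using measure_nonneg[of \<mu> U] by linarith
  define \<T> where "\<T> = {T. open T \<and> measure \<mu> (circle \<inter> T) = 0}"
  have "circle \<subseteq> \<Union>\<T>"
  proof
    fix x :: complex
    assume x: "x \<in> circle"
    obtain n \<omega> where \<omega>: "\<forall>k. \<omega> k \<in> {1..N}" "Zorb h n x \<omega> \<in> U"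
      using minimal assms x unfolding forward_minimal_def by blast
    let ?W = "{y \<in> circle. Zorb h n y \<omega> \<in> U}"
    have W: "openin (top_of_set circle) ?W" "measure \<mu> ?W = 0"
      using null_open_orbit_vimage[OF \<omega>(1) assms(1) U] by auto
    then obtain T where T: "open T" "?W = circle \<inter> T"
      by (auto simp: openin_open)
    then have "T \<in> \<T>"
      using W(2) by (simp add: \<T>_def)
    moreover have "x \<in> T"
      using T(2) x \<omega>(2) by blast
    ultimately show "x \<in> \<Union>\<T>"
      by blast
  qed
  then obtain \<T>' where \<T>': "\<T>' \<subseteq> \<T>" "finite \<T>'" "circle \<subseteq> \<Union>\<T>'"
    using compactE[OF compact_sphere] by (metis \<T>_def mem_Collect_eq)
  have "(\<Union>T\<in>\<T>'. circle \<inter> T) = circle"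
    using \<T>'(3) by blast
  then have "1 = measure \<mu> (\<Union>T\<in>\<T>'. circle \<inter> T)"
    using prob_space by simp
  also have "\<dots> \<le> (\<Sum>T\<in>\<T>'. measure \<mu> (circle \<inter> T))"
    using \<T>' by (intro measure_UNION_le borel_in_sets) (auto simp: \<T>_def)
  also have "\<dots> = 0"
    using \<T>'(1) by (intro sum.neutral) (auto simp: \<T>_def)
  finally show False
    by simp
qed

sublocale diffuse_circle_prob \<mu>
  using no_atoms full_support by unfold_locales

end

section \<open>Conjugation by an isometry\<close>

lemma ball2_bij_betw_iff:
  assumes "bij_betw \<phi> S S" and "\<And>u v. u \<in> S \<Longrightarrow> v \<in> S \<Longrightarrow> P (\<phi> u) (\<phi> v) \<longleftrightarrow> Q u v"
  shows "(\<forall>x\<in>S. \<forall>y\<in>S. P x y) \<longleftrightarrow> (\<forall>u\<in>S. \<forall>v\<in>S. Q u v)"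
proof -
  have "\<phi> ` S = S"
    using assms(1) by (rule bij_betw_imp_surj_on)
  then have "(\<forall>x\<in>S. \<forall>y\<in>S. P x y) \<longleftrightarrow> (\<forall>x\<in>\<phi> ` S. \<forall>y\<in>\<phi> ` S. P x y)"
    by simp
  also have "\<dots> \<longleftrightarrow> (\<forall>u\<in>S. \<forall>v\<in>S. Q u v)"
    using assms(2) by simp
  finally show ?thesis .
qed

context
  fixes \<phi> :: "complex \<Rightarrow> complex" and d \<rho> :: "complex \<Rightarrow> complex \<Rightarrow> real"
    and N :: nat and f :: "nat \<Rightarrow> complex \<Rightarrow> complex"
  assumes bij: "bij_betw \<phi> circle circle"
    and isometry: "\<And>u v. u \<in> circle \<Longrightarrow> v \<in> circle \<Longrightarrow> d (\<phi> u) (\<phi> v) = \<rho> u v"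
    and maps: "\<And>j x. j \<in> {1..N} \<Longrightarrow> x \<in> circle \<Longrightarrow> f j x \<in> circle"
begin

lemma dist_conjugate:
  assumes "j \<in> {1..N}" "u \<in> circle" "v \<in> circle"
  shows "d ((\<phi> \<circ> f j \<circ> inv_into circle \<phi>) (\<phi> u)) ((\<phi> \<circ> f j \<circ> inv_into circle \<phi>) (\<phi> v))
    = \<rho> (f j u) (f j v)"
  using isometry[OF maps[OF assms(1,2)] maps[OF assms(1,3)]] bij_betw_imp_inj_on[OF bij] assms(2,3)
  by simp

lemma nonexpansive_on_average_conjugate:
  "nonexpansive_on_average N (\<lambda>j. \<phi> \<circ> f j \<circ> inv_into circle \<phi>) p d \<longleftrightarrow>
   nonexpansive_on_average N f p \<rho>"
  unfolding nonexpansive_on_average_def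
proof (rule ball2_bij_betw_iff[OF bij])
  fix u v
  assume uv: "u \<in> circle" "v \<in> circle"
  have "(\<Sum>j=1..N. p j * d ((\<phi> \<circ> f j \<circ> inv_into circle \<phi>) (\<phi> u)) ((\<phi> \<circ> f j \<circ> inv_into circle \<phi>) (\<phi> v)))
      = (\<Sum>j=1..N. p j * \<rho> (f j u) (f j v))"
    by (rule sum.cong[OF refl]) (simp only: dist_conjugate uv)
  then show "(\<Sum>j=1..N. p j * d ((\<phi> \<circ> f j \<circ> inv_into circle \<phi>) (\<phi> u)) ((\<phi> \<circ> f j \<circ> inv_into circle \<phi>) (\<phi> v)))
      \<le> d (\<phi> u) (\<phi> v) \<longleftrightarrow> (\<Sum>j=1..N. p j * \<rho> (f j u) (f j v)) \<le> \<rho> u v"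
    using isometry[OF uv] by simp
qed

lemma Lset_conjugate: "Lset N (\<lambda>j. \<phi> \<circ> f j \<circ> inv_into circle \<phi>) d = Lset N f \<rho>"
proof -
  have "(\<forall>x\<in>circle. \<forall>y\<in>circle. d x y = s \<longrightarrow>
          d ((\<phi> \<circ> f j \<circ> inv_into circle \<phi>) x) ((\<phi> \<circ> f j \<circ> inv_into circle \<phi>) y) = s) \<longleftrightarrow>
        (\<forall>x\<in>circle. \<forall>y\<in>circle. \<rho> x y = s \<longrightarrow> \<rho> (f j x) (f j y) = s)" if j: "j \<in> {1..N}" for j s
    by (rule ball2_bij_betw_iff[OF bij]) (use dist_conjugate[OF j] isometry in simp)
  then show ?thesis
    unfolding Lset_def by auto
qed

end

theorem proposition1:
  fixes N :: nat and f :: "nat \<Rightarrow> complex \<Rightarrow> complex" and p :: "nat \<Rightarrow> real"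
    and \<mu> :: "complex measure"
  assumes homeo: "\<forall>j\<in>{1..N}. \<exists>g. homeomorphism circle circle (f j) g"
    and p_pos: "\<forall>j\<in>{1..N}. p j > 0"
    and p_sum: "(\<Sum>j=1..N. p j) = 1"
    and bmin: "backward_minimal N f"
    and inv: "invariant_measure N (inverse_family f) p \<mu>"
  defines "\<rho> \<equiv> (\<lambda>x y. min (measure \<mu> (arc x y)) (measure \<mu> (arc y x)))"
    and "g \<equiv> (\<lambda>j. Phi \<mu> \<circ> f j \<circ> inv_into circle (Phi \<mu>))"
  shows "Metric_space circle \<rho>
         \<and> nonexpansive_on_average N f p \<rho>
         \<and> bij_betw (Phi \<mu>) circle circle
         \<and> nonexpansive_on_average N g p dS
         \<and> Lset N g dS = Lset N f \<rho>"
proof -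
  have f_inv: "homeomorphism circle circle (inverse_family f j) (f j)" if "j \<in> {1..N}" for j
    using homeo homeomorphism_inv_into homeomorphism_sym that by (metis inverse_family_def)
  have homeo_inv: "\<forall>j\<in>{1..N}. \<exists>g. homeomorphism circle circle (inverse_family f j) g"
    using f_inv by blast
  interpret minimal_stationary_measure N "inverse_family f" p \<mu>
    by unfold_locales
      (use homeo_inv p_pos p_sum bmin inv in \<open>simp_all add: backward_minimal_def\<close>)
  have \<rho>: "\<rho> = arc_dist \<mu>"
    unfolding \<rho>_def arc_dist_def by (intro ext) simp
  have maps: "f j x \<in> circle" if "j \<in> {1..N}" "x \<in> circle" for j x
    using f_inv homeomorphism_image2 that by blast
  show ?thesis
    unfolding \<rho> g_def
    using Metric_space_arc_dist nonexpansive_on_average_inverse[OF f_inv] bij_betw_Phi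
      nonexpansive_on_average_conjugate[where d = dS and \<rho> = "arc_dist \<mu>" and f = f and N = N,
        OF bij_betw_Phi dS_Phi maps]
      Lset_conjugate[where d = dS and \<rho> = "arc_dist \<mu>" and f = f and N = N,
        OF bij_betw_Phi dS_Phi maps]
    by blast
qed

end
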